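(* In the fixing phase described in the context, the expected regret accumulated by the whole system during the fixing phase is upper bounded by $$K^2M\exp\left(\frac{K-1}{M-1}\right).$$
   Context: There are $K$ users and $M\ge2$ channels, slotted synchronized time, no communication. A user on channel $m$ together with $n-1$ other users gets a reward in $[0,1]$ with mean $\mu(m,n)$ (the same for all users), so the regret incurred by a user in one slot is at most $1$. $f^\ast=(f^\ast(1),\dots,f^\ast(M))$ is a maximizer of $\sum_{i}f(i)\mu(i,f(i))$ over nonnegative integer vectors with $\sum_i f(i)=K$ (the optimal number of users per channel). Fixing phase (procedure Alloc): in every slot, each user that is not yet fixed picks a channel uniformly at random among the $M$ channels; if the number of users on the chosen channel $a$ in that slot is such that $\mu(a,f(a))\ge\mu(a,f^\ast(a))$ (i.e. at most $f^\ast(a)$ users are on it), the user becomes fixed on $a$ and chooses $a$ in all later slots of the phase. The fixing phase lasts until all users are fixed; regret is incurred during it. *)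

theory Defs
  imports "HOL-Probability.Probability"
begin

text \<open>Users are 0..<K, channels are 0..<M. A state of the fixing phase records,
for every user, the channel it is fixed on (Some a) or None if not yet fixed.\<close>

type_synonym fstate = "nat \<Rightarrow> nat option"

definition load :: "nat \<Rightarrow> (nat \<Rightarrow> nat) \<Rightarrow> nat \<Rightarrow> nat" where
  "load K c m = card {j \<in> {0..<K}. c j = m}"

text \<open>Regret of the whole system in one slot with configuration c:
 optimal expected total reward minus achieved expected total reward.\<close>
definition slot_regret ::
  "nat \<Rightarrow> nat \<Rightarrow> (nat \<Rightarrow> nat) \<Rightarrow> (nat \<Rightarrow> nat \<Rightarrow> real) \<Rightarrow> (nat \<Rightarrow> nat) \<Rightarrow> real" where
  "slot_regret K M fstar \<mu> c =
     (\<Sum>m<M. real (fstar m) * \<mu> m (fstar m))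
     - (\<Sum>m<M. real (load K c m) * \<mu> m (load K c m))"

definition choice_pmf :: "nat \<Rightarrow> nat \<Rightarrow> fstate \<Rightarrow> (nat \<Rightarrow> nat) pmf" where
  "choice_pmf K M s =
     map_pmf (\<lambda>r i. case s i of Some a \<Rightarrow> a | None \<Rightarrow> r i)
             (Pi_pmf {0..<K} 0 (\<lambda>_. pmf_of_set {0..<M}))"

definition next_state :: "nat \<Rightarrow> (nat \<Rightarrow> nat) \<Rightarrow> fstate \<Rightarrow> (nat \<Rightarrow> nat) \<Rightarrow> fstate" where
  "next_state K fstar s c = (\<lambda>i. case s i of Some a \<Rightarrow> Some a
      | None \<Rightarrow> (if i < K \<and> load K c (c i) \<le> fstar (c i) then Some (c i) else None))"

definition all_fixed :: "nat \<Rightarrow> fstate \<Rightarrow> bool" where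
  "all_fixed K s \<longleftrightarrow> (\<forall>i<K. s i \<noteq> None)"

primrec exp_regret ::
  "nat \<Rightarrow> nat \<Rightarrow> (nat \<Rightarrow> nat) \<Rightarrow> (nat \<Rightarrow> nat \<Rightarrow> real) \<Rightarrow> nat \<Rightarrow> fstate \<Rightarrow> real" where
  "exp_regret K M fstar \<mu> 0 s = 0"
| "exp_regret K M fstar \<mu> (Suc n) s =
     (if all_fixed K s then 0
      else measure_pmf.expectation (choice_pmf K M s)
             (\<lambda>c. slot_regret K M fstar \<mu> c
                  + exp_regret K M fstar \<mu> n (next_state K fstar s c)))"

end

theory Submission
  imports Defs
begin

text \<open>No channel ever holds more fixed users than its optimal load \<open>f\<^sup>*\<close>, so as long
  as some user \<open>i\<close> is unfixed there is a channel \<open>a\<close> with spare capacity.  With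
  probability at least \<open>p = (1/M) ((M-1)/M)^(K-1)\<close> the user \<open>i\<close> picks \<open>a\<close> while
  every other unfixed user avoids it, and then \<open>i\<close> becomes fixed.  Since a slot costs
  the system at most \<open>K\<close>, \<open>K/p\<close> times the number of unfixed users dominates the
  expected remaining regret; from the initial state this is
  \<open>K\<^sup>2/p \<le> K\<^sup>2 M exp((K-1)/(M-1))\<close>, because \<open>M/(M-1) \<le> exp(1/(M-1))\<close>.\<close>

definition fixed_on :: "nat \<Rightarrow> fstate \<Rightarrow> nat \<Rightarrow> nat set" where
  "fixed_on K s a = {i \<in> {0..<K}. s i = Some a}"

definition unfixed :: "nat \<Rightarrow> fstate \<Rightarrow> nat set" where
  "unfixed K s = {i \<in> {0..<K}. s i = None}"

definition within_capacity :: "nat \<Rightarrow> (nat \<Rightarrow> nat) \<Rightarrow> fstate \<Rightarrow> bool" where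
  "within_capacity K fstar s \<longleftrightarrow> (\<forall>a. card (fixed_on K s a) \<le> fstar a)"

definition lone_pick :: "nat \<Rightarrow> fstate \<Rightarrow> nat \<Rightarrow> nat \<Rightarrow> (nat \<Rightarrow> nat) set" where
  "lone_pick K s i a = {c. c i = a \<and> (\<forall>j \<in> unfixed K s - {i}. c j \<noteq> a)}"

definition lone_pick_prob :: "nat \<Rightarrow> nat \<Rightarrow> real" where
  "lone_pick_prob M K = 1 / real M * ((real M - 1) / real M) ^ (K - 1)"

lemma lone_pick_prob_pos: "M \<ge> 2 \<Longrightarrow> lone_pick_prob M K > 0"
  by (simp add: lone_pick_prob_def)

lemma within_capacity_initial: "within_capacity K fstar (\<lambda>_. None)"
  by (simp add: within_capacity_def fixed_on_def)

lemma card_unfixed_initial: "card (unfixed K (\<lambda>_. None)) = K"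
  by (simp add: unfixed_def)

lemma finite_set_pmf_choice_pmf:
  assumes "M > 0"
  shows "finite (set_pmf (choice_pmf K M s))"
  using assms unfolding choice_pmf_def
  by (simp add: set_Pi_pmf o_def finite_PiE_dflt)

lemma choice_pmf_fixed:
  assumes "c \<in> set_pmf (choice_pmf K M s)" "s i = Some a"
  shows "c i = a"
  using assms by (auto simp: choice_pmf_def)

lemma slot_regret_le:
  assumes "\<And>m n. m < M \<Longrightarrow> 0 \<le> \<mu> m n \<and> \<mu> m n \<le> 1"
    and "(\<Sum>m<M. fstar m) = K"
  shows "slot_regret K M fstar \<mu> c \<le> real K"
proof -
  have "(\<Sum>m<M. real (fstar m) * \<mu> m (fstar m)) \<le> (\<Sum>m<M. real (fstar m))"
    by (intro sum_mono) (use assms(1) in \<open>auto intro: mult_left_le\<close>)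
  also have "\<dots> = real K"
    using assms(2) by (metis of_nat_sum)
  finally have "(\<Sum>m<M. real (fstar m) * \<mu> m (fstar m)) \<le> real K" .
  moreover have "0 \<le> (\<Sum>m<M. real (load K c m) * \<mu> m (load K c m))"
    by (intro sum_nonneg) (use assms(1) in auto)
  ultimately show ?thesis
    unfolding slot_regret_def by linarith
qed

lemma within_capacity_next_state:
  assumes "within_capacity K fstar s" "c \<in> set_pmf (choice_pmf K M s)"
  shows "within_capacity K fstar (next_state K fstar s c)"
  unfolding within_capacity_def
proof
  fix a
  show "card (fixed_on K (next_state K fstar s c) a) \<le> fstar a"
  proof (cases "load K c a \<le> fstar a")
    case True
    have "fixed_on K (next_state K fstar s c) a \<subseteq> {j \<in> {0..<K}. c j = a}"
      using choice_pmf_fixed[OF assms(2)]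
      by (auto simp: fixed_on_def next_state_def split: option.splits if_splits)
    then have "card (fixed_on K (next_state K fstar s c) a) \<le> load K c a"
      unfolding load_def by (intro card_mono) auto
    with True show ?thesis by linarith
  next
    case False
    then have "fixed_on K (next_state K fstar s c) a \<subseteq> fixed_on K s a"
      by (auto simp: fixed_on_def next_state_def split: option.splits if_splits)
    then have "card (fixed_on K (next_state K fstar s c) a) \<le> card (fixed_on K s a)"
      by (intro card_mono) (auto simp: fixed_on_def)
    with assms(1) show ?thesis
      unfolding within_capacity_def by (meson order_trans)
  qed
qed

lemma unfixed_next_state_subset: "unfixed K (next_state K fstar s c) \<subseteq> unfixed K s"
  by (auto simp: unfixed_def next_state_def split: option.splits if_splits)

lemma lone_pick_gets_fixed:
  assumes "c \<in> set_pmf (choice_pmf K M s)" "i \<in> unfixed K s" "c \<in> lone_pick K s i a"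
    and "card (fixed_on K s a) < fstar a"
  shows "next_state K fstar s c i = Some a"
proof -
  have "{j \<in> {0..<K}. c j = a} \<subseteq> insert i (fixed_on K s a)"
  proof
    fix j assume j: "j \<in> {j \<in> {0..<K}. c j = a}"
    show "j \<in> insert i (fixed_on K s a)"
    proof (cases "s j")
      case None
      with j assms(3) show ?thesis by (auto simp: lone_pick_def unfixed_def)
    next
      case (Some b)
      with j choice_pmf_fixed[OF assms(1) Some] show ?thesis by (auto simp: fixed_on_def)
    qed
  qed
  then have "load K c a \<le> card (insert i (fixed_on K s a))"
    unfolding load_def by (intro card_mono) (auto simp: fixed_on_def)
  also have "\<dots> \<le> Suc (card (fixed_on K s a))"
    by (simp add: card_insert_le_m1)
  finally have "load K c a \<le> fstar a"
    using assms(4) by simp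
  with assms(2,3) show ?thesis
    by (simp add: next_state_def unfixed_def lone_pick_def)
qed

lemma card_unfixed_next_state_le:
  assumes "c \<in> set_pmf (choice_pmf K M s)" "i \<in> unfixed K s"
    and "card (fixed_on K s a) < fstar a"
  shows "real (card (unfixed K (next_state K fstar s c)))
           \<le> real (card (unfixed K s)) - indicator (lone_pick K s i a) c"
proof (cases "c \<in> lone_pick K s i a")
  case True
  then have "i \<notin> unfixed K (next_state K fstar s c)"
    using lone_pick_gets_fixed[where fstar = fstar, OF assms(1,2) True assms(3)] by (simp add: unfixed_def)
  with assms(2) have "unfixed K (next_state K fstar s c) \<subset> unfixed K s"
    using unfixed_next_state_subset by blast
  then have "card (unfixed K (next_state K fstar s c)) < card (unfixed K s)"
    by (intro psubset_card_mono) (simp add: unfixed_def)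
  with True show ?thesis by simp
next
  case False
  have "card (unfixed K (next_state K fstar s c)) \<le> card (unfixed K s)"
    by (intro card_mono unfixed_next_state_subset) (simp add: unfixed_def)
  with False show ?thesis by simp
qed

lemma exists_channel_below_capacity:
  assumes "within_capacity K fstar s" "(\<Sum>m<M. fstar m) = K" "i \<in> unfixed K s"
  shows "\<exists>a<M. card (fixed_on K s a) < fstar a"
proof (rule ccontr)
  assume "\<not> ?thesis"
  then have "K \<le> (\<Sum>a<M. card (fixed_on K s a))"
    using assms(2) by (metis not_less sum_mono lessThan_iff)
  also have "\<dots> = card (\<Union>a<M. fixed_on K s a)"
    by (rule card_UN_disjoint[symmetric]) (auto simp: fixed_on_def)
  also have "\<dots> \<le> card ({0..<K} - {i})"
    using assms(3) by (intro card_mono) (auto simp: fixed_on_def unfixed_def)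
  also have "\<dots> < K"
    using assms(3) by (simp add: unfixed_def)
  finally show False by simp
qed

lemma prob_lone_pick_ge:
  assumes "M > 0" "i \<in> unfixed K s" "a < M"
  shows "lone_pick_prob M K \<le> measure_pmf.prob (choice_pmf K M s) (lone_pick K s i a)"
proof -
  define g where "g = (\<lambda>(r::nat \<Rightarrow> nat) j. case s j of Some b \<Rightarrow> b | None \<Rightarrow> r j)"
  define B where "B = (\<lambda>j::nat. if j = i then {a} else - {a})"
  let ?P = "Pi_pmf {0..<K} (0::nat) (\<lambda>_. pmf_of_set {0..<M})"
  have i: "i < K" "s i = None"
    using assms(2) by (auto simp: unfixed_def)
  have prob_B: "measure_pmf.prob (pmf_of_set {0..<M}) (B j) =
      (if j = i then 1 / real M else (real M - 1) / real M)" for j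
  proof -
    have "card ({0..<M} \<inter> - {a}) = M - 1"
      using assms(3) by (simp add: Diff_eq[symmetric] card_Diff_singleton)
    then show ?thesis
      using assms(1,3) by (simp add: B_def measure_pmf_of_set Int_absorb1 of_nat_diff)
  qed
  have "lone_pick_prob M K = (\<Prod>j\<in>{0..<K}. measure_pmf.prob (pmf_of_set {0..<M}) (B j))"
    using i by (simp add: prob_B prod.remove lone_pick_prob_def)
  also have "\<dots> = measure_pmf.prob ?P (Pi {0..<K} B)"
    by (rule measure_Pi_pmf_Pi[symmetric]) simp
  also have "\<dots> \<le> measure_pmf.prob ?P (g -` lone_pick K s i a)"
    using i by (intro measure_pmf.finite_measure_mono)
      (auto simp: B_def g_def lone_pick_def unfixed_def Pi_def)
  also have "\<dots> = measure_pmf.prob (choice_pmf K M s) (lone_pick K s i a)"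
    unfolding choice_pmf_def g_def by simp
  finally show ?thesis .
qed

lemma expectation_le_diff_prob:
  fixes Q :: "'a pmf"
  assumes "finite (set_pmf Q)" "0 \<le> d" "p \<le> measure_pmf.prob Q A"
    and "\<And>x. x \<in> set_pmf Q \<Longrightarrow> f x \<le> b - d * indicator A x"
  shows "measure_pmf.expectation Q f \<le> b - d * p"
proof -
  have "measure_pmf.expectation Q f \<le> measure_pmf.expectation Q (\<lambda>x. b - d * indicator A x)"
    by (intro integral_mono_AE integrable_measure_pmf_finite AE_pmfI assms)
  also have "\<dots> = b - d * measure_pmf.prob Q A"
    by (subst Bochner_Integration.integral_diff) (simp_all add: integrable_measure_pmf_finite assms(1))
  also have "\<dots> \<le> b - d * p"
    using assms(2,3) by (simp add: mult_left_mono)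
  finally show ?thesis .
qed

lemma exp_regret_le_unfixed:
  assumes M2: "M \<ge> 2"
    and mu_range: "\<And>m n. m < M \<Longrightarrow> 0 \<le> \<mu> m n \<and> \<mu> m n \<le> 1"
    and fstar_sum: "(\<Sum>m<M. fstar m) = K"
    and "within_capacity K fstar s"
  shows "exp_regret K M fstar \<mu> n s
           \<le> real K / lone_pick_prob M K * real (card (unfixed K s))"
  using assms(4)
proof (induction n arbitrary: s)
  case 0
  then show ?case
    using lone_pick_prob_pos[OF M2, of K] by simp
next
  case (Suc n s)
  define C where "C = real K / lone_pick_prob M K"
  have "C \<ge> 0" "C * lone_pick_prob M K = real K"
    using lone_pick_prob_pos[OF M2, of K] by (simp_all add: C_def)
  show ?case
  proof (cases "all_fixed K s")
    case True
    with \<open>C \<ge> 0\<close> show ?thesis by (simp flip: C_def)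
  next
    case False
    then obtain i where i: "i \<in> unfixed K s"
      by (auto simp: all_fixed_def unfixed_def)
    obtain a where a: "a < M" "card (fixed_on K s a) < fstar a"
      using exists_channel_below_capacity[OF Suc.prems fstar_sum i] by blast
    have "slot_regret K M fstar \<mu> c + exp_regret K M fstar \<mu> n (next_state K fstar s c)
            \<le> (real K + C * real (card (unfixed K s))) - C * indicator (lone_pick K s i a) c"
      if c: "c \<in> set_pmf (choice_pmf K M s)" for c
    proof -
      have slot: "slot_regret K M fstar \<mu> c \<le> real K"
        by (rule slot_regret_le[OF mu_range fstar_sum])
      have "exp_regret K M fstar \<mu> n (next_state K fstar s c)
              \<le> C * real (card (unfixed K (next_state K fstar s c)))"
        using Suc.IH[OF within_capacity_next_state[OF Suc.prems c]] by (simp add: C_def)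
      also have "\<dots> \<le> C * (real (card (unfixed K s)) - indicator (lone_pick K s i a) c)"
        using card_unfixed_next_state_le[where fstar = fstar, OF c i a(2)] \<open>C \<ge> 0\<close>
        by (rule mult_left_mono)
      finally show ?thesis
        using slot by (simp add: algebra_simps)
    qed
    then have "exp_regret K M fstar \<mu> (Suc n) s
                 \<le> (real K + C * real (card (unfixed K s))) - C * lone_pick_prob M K"
      using False M2 \<open>C \<ge> 0\<close> prob_lone_pick_ge[OF _ i a(1)]
      by (simp add: expectation_le_diff_prob finite_set_pmf_choice_pmf)
    with \<open>C * lone_pick_prob M K = real K\<close> show ?thesis
      by (simp add: C_def)
  qed
qed

lemma inverse_lone_pick_prob_le:
  assumes "M \<ge> 2" "K \<ge> 1"
  shows "1 / lone_pick_prob M K \<le> real M * exp ((real K - 1) / (real M - 1))"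
proof -
  have M1: "real M - 1 > 0"
    using assms(1) by simp
  have "real M / (real M - 1) = 1 + 1 / (real M - 1)"
    using M1 by (simp add: field_simps)
  also have "\<dots> \<le> exp (1 / (real M - 1))"
    by (rule exp_ge_add_one_self)
  finally have ratio: "real M / (real M - 1) \<le> exp (1 / (real M - 1))" .
  have "1 / lone_pick_prob M K = real M * (real M / (real M - 1)) ^ (K - 1)"
    using M1 by (simp add: lone_pick_prob_def field_simps power_divide)
  also have "\<dots> \<le> real M * exp (1 / (real M - 1)) ^ (K - 1)"
    using ratio M1 by (intro mult_left_mono power_mono) auto
  also have "\<dots> = real M * exp ((real K - 1) / (real M - 1))"
    using assms(2) by (simp add: exp_of_nat_mult[symmetric] of_nat_diff)
  finally show ?thesis .
qed

theorem lemma3: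
  fixes K M :: nat and fstar :: "nat \<Rightarrow> nat" and \<mu> :: "nat \<Rightarrow> nat \<Rightarrow> real"
  assumes M2: "M \<ge> 2"
    and mu_range: "\<And>m n. m < M \<Longrightarrow> 0 \<le> \<mu> m n \<and> \<mu> m n \<le> 1"
    and fstar_sum: "(\<Sum>m<M. fstar m) = K"
    and fstar_opt: "\<And>f :: nat \<Rightarrow> nat. (\<Sum>m<M. f m) = K \<Longrightarrow>
          (\<Sum>m<M. real (f m) * \<mu> m (f m)) \<le> (\<Sum>m<M. real (fstar m) * \<mu> m (fstar m))"
  shows "\<forall>n. exp_regret K M fstar \<mu> n (\<lambda>_. None)
            \<le> real K ^ 2 * real M * exp ((real K - 1) / (real M - 1))"
proof
  fix n
  have "exp_regret K M fstar \<mu> n (\<lambda>_. None) \<le> real K ^ 2 * (1 / lone_pick_prob M K)"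
    using exp_regret_le_unfixed[OF M2 mu_range fstar_sum within_capacity_initial, where n = n]
    by (simp add: card_unfixed_initial power2_eq_square)
  also have "\<dots> \<le> real K ^ 2 * (real M * exp ((real K - 1) / (real M - 1)))"
  proof (cases "K = 0")
    case False
    then show ?thesis
      using inverse_lone_pick_prob_le[OF M2, of K] by (intro mult_left_mono) auto
  qed simp
  finally show "exp_regret K M fstar \<mu> n (\<lambda>_. None)
                  \<le> real K ^ 2 * real M * exp ((real K - 1) / (real M - 1))"
    by (simp add: mult.assoc)
qed

end
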